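(* Let $(\vdash,\overline{\cdot},\widehat{\cdot})$ be a setting satisfying Pre-Relevance, let $\mathcal{S},\mathcal{S}'\subseteq\mathcal{L}$ with $\mathcal{S}\mid\mathcal{S}'$, let $\mathsf{Sem}\in\{\mathsf{Cmp},\mathsf{Prf},\mathsf{Grd}\}$, and let $\mathcal{E}_1\in\mathsf{Sem}(\mathcal{AF}_{\vdash}(\mathcal{S}))$. Then there is an $\mathcal{E}\in\mathsf{Sem}(\mathcal{AF}_{\vdash}(\mathcal{S}\cup\mathcal{S}'))$ with $\mathcal{E}_1=\mathcal{E}\cap\mathit{Arg}_{\vdash}(\mathcal{S})$.
   Context: $\mathcal{L}$ is the set of formulas of a language built from propositional atoms; $\mathsf{Atoms}(\mathcal{S})$ is the set of atoms occurring in $\mathcal{S}$, and $\mathcal{S}_1\mid\mathcal{S}_2$ means $\mathsf{Atoms}(\mathcal{S}_1)\cap\mathsf{Atoms}(\mathcal{S}_2)=\emptyset$. A setting is $(\vdash,\overline{\cdot},\widehat{\cdot})$ with ${\vdash}\subseteq\wp_{\sf fin}(\mathcal{L})\times\mathcal{L}$ arbitrary, $\overline{\cdot}:\mathcal{L}\to\wp(\mathcal{L})$, $\widehat{\cdot}$ assigning to each nonempty finite set a finite set of formulas, with $\widehat{\emptyset}=\emptyset$. $\mathit{Arg}_{\vdash}(\mathcal{S})=\{(\Gamma,\gamma):\Gamma\subseteq\mathcal{S}\text{ finite},\Gamma\vdash\gamma\}$; $\mathcal{AF}_{\vdash}(\mathcal{S})$ is the attack graph on it where $(\Gamma,\gamma)$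 attacks $(\Gamma',\gamma')$ iff $\gamma\in\overline{\phi}$ for some $\phi\in\widehat{\Gamma'}$. Complete extension = conflict-free set defending each member (every attacker of a member is attacked by a member) and containing every argument it defends; $\mathsf{Cmp}(\cdot)$ is the set of complete extensions, $\mathsf{Prf}(\cdot)$ the $\subseteq$-maximal ones, and $\mathsf{Grd}(\cdot)$ the singleton containing the $\subseteq$-minimal one. Pre-Relevance of the setting: (a) for all $\mathcal{S}_1,\mathcal{S}_2,\phi$ with $\mathcal{S}_1\cup\{\phi\}\mid\mathcal{S}_2$, $\mathcal{S}_1\cup\mathcal{S}_2\vdash\phi$ implies $\mathcal{S}_1'\vdash\phi$ for some $\mathcal{S}_1'\subseteq\mathcal{S}_1$; (b) primeness: for all sets of atoms $\mathcal{A}_1\mid\mathcal{A}_2$, all finite $\mathcal{S}_1,\mathcal{T}_1,\mathcal{S}_2,\mathcal{T}_2$ with $\mathsf{Atoms}(\mathcal{S}_i),\mathsf{Atoms}(\mathcal{T}_i)\subseteq\mathcal{A}_i$, and all $\phi,\psi$ with $\psi\in\overline{\phi}$, $\phi\in\widehat{\mathcal{T}_1\cup\mathcal{T}_2}$: if $\mathcal{S}_1\cup\mathcal{S}_2\vdash\psi$ then there are $i\in\{1,2\}$, $\mathcal{S}_i'\subseteq\mathcal{S}_i$, $\phi_i\in\widehat{\mathcal{T}_i}$, $\psi_i\in\overline{\phi_i}$ with $\mathcal{S}_i'\vdash\psi_i$; (c) $\widehat{\Delta}\subseteq\widehat{\Delta\cup\Delta'}$ for all finite $\Delta,\Delta'$.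 *)

theory Defs
  imports Main
begin

text \<open>A setting is (vd, ctr, hat): vd Gamma gamma means Gamma |- gamma
 (only finite Gamma are relevant), ctr = contrariness overline, hat = hat operator.\<close>

definition Atoms :: "('f \<Rightarrow> 'a set) \<Rightarrow> 'f set \<Rightarrow> 'a set" where
  "Atoms atoms S = (\<Union>\<phi>\<in>S. atoms \<phi>)"

definition indep :: "('f \<Rightarrow> 'a set) \<Rightarrow> 'f set \<Rightarrow> 'f set \<Rightarrow> bool" where
  "indep atoms S1 S2 \<longleftrightarrow> Atoms atoms S1 \<inter> Atoms atoms S2 = {}"

definition setting :: "('f set \<Rightarrow> 'f set) \<Rightarrow> bool" where
  "setting hat \<longleftrightarrow> hat {} = {} \<and> (\<forall>\<Delta>. finite \<Delta> \<and> \<Delta> \<noteq> {} \<longrightarrow> finite (hat \<Delta>))"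

definition pre_relevance ::
  "('f \<Rightarrow> 'a set) \<Rightarrow> ('f set \<Rightarrow> 'f \<Rightarrow> bool) \<Rightarrow> ('f \<Rightarrow> 'f set) \<Rightarrow> ('f set \<Rightarrow> 'f set) \<Rightarrow> bool"
  where
  "pre_relevance atoms vd ctr hat \<longleftrightarrow>
    (\<forall>S1 S2 \<phi>. finite S1 \<and> finite S2 \<and> indep atoms (S1 \<union> {\<phi>}) S2 \<and> vd (S1 \<union> S2) \<phi>
        \<longrightarrow> (\<exists>S1'. S1' \<subseteq> S1 \<and> vd S1' \<phi>))
  \<and> (\<forall>A1 A2 S1 T1 S2 T2 \<phi> \<psi>.
        A1 \<inter> A2 = {} \<and> finite S1 \<and> finite T1 \<and> finite S2 \<and> finite T2 \<and>
        Atoms atoms S1 \<subseteq> A1 \<and> Atoms atoms T1 \<subseteq> A1 \<and>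
        Atoms atoms S2 \<subseteq> A2 \<and> Atoms atoms T2 \<subseteq> A2 \<and>
        \<psi> \<in> ctr \<phi> \<and> \<phi> \<in> hat (T1 \<union> T2) \<and> vd (S1 \<union> S2) \<psi>
        \<longrightarrow> (\<exists>S1' \<phi>1 \<psi>1. S1' \<subseteq> S1 \<and> \<phi>1 \<in> hat T1 \<and> \<psi>1 \<in> ctr \<phi>1 \<and> vd S1' \<psi>1)
          \<or> (\<exists>S2' \<phi>2 \<psi>2. S2' \<subseteq> S2 \<and> \<phi>2 \<in> hat T2 \<and> \<psi>2 \<in> ctr \<phi>2 \<and> vd S2' \<psi>2))
  \<and> (\<forall>\<Delta> \<Delta>'. finite \<Delta> \<and> finite \<Delta>' \<longrightarrow> hat \<Delta> \<subseteq> hat (\<Delta> \<union> \<Delta>'))"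

definition Arg :: "('f set \<Rightarrow> 'f \<Rightarrow> bool) \<Rightarrow> 'f set \<Rightarrow> ('f set \<times> 'f) set" where
  "Arg vd S = {(\<Gamma>, \<gamma>). finite \<Gamma> \<and> \<Gamma> \<subseteq> S \<and> vd \<Gamma> \<gamma>}"

definition attacks :: "('f \<Rightarrow> 'f set) \<Rightarrow> ('f set \<Rightarrow> 'f set) \<Rightarrow> ('f set \<times> 'f) \<Rightarrow> ('f set \<times> 'f) \<Rightarrow> bool" where
  "attacks ctr hat a b \<longleftrightarrow> (\<exists>\<phi>\<in>hat (fst b). snd a \<in> ctr \<phi>)"

definition conflict_free :: "('x \<Rightarrow> 'x \<Rightarrow> bool) \<Rightarrow> 'x set \<Rightarrow> bool" where
  "conflict_free R E \<longleftrightarrow> (\<forall>a\<in>E. \<forall>b\<in>E. \<not> R a b)"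

definition defends :: "'x set \<Rightarrow> ('x \<Rightarrow> 'x \<Rightarrow> bool) \<Rightarrow> 'x set \<Rightarrow> 'x \<Rightarrow> bool" where
  "defends A R E a \<longleftrightarrow> (\<forall>b\<in>A. R b a \<longrightarrow> (\<exists>c\<in>E. R c b))"

definition complete_ext :: "'x set \<Rightarrow> ('x \<Rightarrow> 'x \<Rightarrow> bool) \<Rightarrow> 'x set \<Rightarrow> bool" where
  "complete_ext A R E \<longleftrightarrow> E \<subseteq> A \<and> conflict_free R E \<and>
     (\<forall>a\<in>E. defends A R E a) \<and> (\<forall>a\<in>A. defends A R E a \<longrightarrow> a \<in> E)"

definition preferred_ext :: "'x set \<Rightarrow> ('x \<Rightarrow> 'x \<Rightarrow> bool) \<Rightarrow> 'x set \<Rightarrow> bool" where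
  "preferred_ext A R E \<longleftrightarrow> complete_ext A R E \<and>
     (\<forall>E'. complete_ext A R E' \<and> E \<subseteq> E' \<longrightarrow> E' = E)"

definition grounded_ext :: "'x set \<Rightarrow> ('x \<Rightarrow> 'x \<Rightarrow> bool) \<Rightarrow> 'x set \<Rightarrow> bool" where
  "grounded_ext A R E \<longleftrightarrow> complete_ext A R E \<and>
     (\<forall>E'. complete_ext A R E' \<longrightarrow> E \<subseteq> E')"

datatype semantics = Cmp | Prf | Grd

fun ext :: "semantics \<Rightarrow> 'x set \<Rightarrow> ('x \<Rightarrow> 'x \<Rightarrow> bool) \<Rightarrow> 'x set \<Rightarrow> bool" where
  "ext Cmp = complete_ext"
| "ext Prf = preferred_ext"
| "ext Grd = grounded_ext"

definition Sem :: "semantics \<Rightarrow> ('f set \<Rightarrow> 'f \<Rightarrow> bool) \<Rightarrow> ('f \<Rightarrow> 'f set) \<Rightarrow> ('f set \<Rightarrow> 'f set)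
   \<Rightarrow> 'f set \<Rightarrow> ('f set \<times> 'f) set set" where
  "Sem s vd ctr hat S = {E. ext s (Arg vd S) (attacks ctr hat) E}"

end

theory Submission
  imports Defs
begin

text \<open>Restricting a complete extension of \<open>AF(S \<union> S')\<close> to the arguments over \<open>S\<close> gives a
  complete extension of \<open>AF(S)\<close>: by primeness, every attack on premises in \<open>S\<close> is already made
  by a sub-argument of the attacker over \<open>S\<close>, and complete extensions are closed under
  sub-arguments. Conversely a complete extension \<open>E1\<close> of \<open>AF(S)\<close> lifts: choose any complete
  extension \<open>E2\<close> of \<open>AF(S')\<close> and accept an argument over \<open>S \<union> S'\<close> iff \<open>E1\<close> defends its
  premises in \<open>S\<close> and \<open>E2\<close> defends the others. The preferred and grounded cases follow from
  these two facts by maximality and minimality alone.\<close>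

section \<open>Extensions of abstract argumentation frameworks\<close>

definition admissible :: "'x set \<Rightarrow> ('x \<Rightarrow> 'x \<Rightarrow> bool) \<Rightarrow> 'x set \<Rightarrow> bool" where
  "admissible A R E \<longleftrightarrow> E \<subseteq> A \<and> conflict_free R E \<and> (\<forall>a\<in>E. defends A R E a)"

lemma complete_ext_iff_admissible:
  "complete_ext A R E \<longleftrightarrow> admissible A R E \<and> (\<forall>a\<in>A. defends A R E a \<longrightarrow> a \<in> E)"
  unfolding complete_ext_def admissible_def by blast

lemma defends_mono: "E \<subseteq> E' \<Longrightarrow> defends A R E a \<Longrightarrow> defends A R E' a"
  unfolding defends_def by blast

lemma admissible_insert:
  assumes adm: "admissible A R E" and "a \<in> A" and def: "defends A R E a"
  shows "admissible A R (insert a E)"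
proof -
  have E: "E \<subseteq> A" "conflict_free R E" "\<forall>b\<in>E. defends A R E b"
    using adm unfolding admissible_def by auto
  have "\<not> R x y" if x: "x \<in> insert a E" and y: "y \<in> insert a E" for x y
  proof
    assume "R x y"
    moreover have "x \<in> A" using x E(1) \<open>a \<in> A\<close> by blast
    ultimately obtain c where c: "c \<in> E" "R c x"
      using y E(3) def unfolding defends_def by blast
    then obtain d where "d \<in> E" "R d c"
      using x E def unfolding defends_def by blast
    with c E(2) show False unfolding conflict_free_def by blast
  qed
  then have "conflict_free R (insert a E)" unfolding conflict_free_def by blast
  moreover have "defends A R (insert a E) b" if "b \<in> insert a E" for b
    using that E(3) def defends_mono[of E "insert a E"] by blast
  ultimately show ?thesis using E(1) \<open>a \<in> A\<close> unfolding admissible_def by blast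
qed

lemma admissible_Union_chain:
  assumes adm: "\<And>X. X \<in> C \<Longrightarrow> admissible A R X"
    and chain: "\<And>X Y. X \<in> C \<Longrightarrow> Y \<in> C \<Longrightarrow> X \<subseteq> Y \<or> Y \<subseteq> X"
  shows "admissible A R (\<Union>C)"
proof -
  have "\<not> R x y" if xy: "x \<in> \<Union>C" "y \<in> \<Union>C" for x y
  proof -
    obtain X Y where XY: "X \<in> C" "Y \<in> C" "x \<in> X" "y \<in> Y" using xy by blast
    then have "conflict_free R (X \<union> Y)"
      using chain[OF XY(1,2)] adm[OF XY(1)] adm[OF XY(2)] unfolding admissible_def
      by (metis sup.absorb1 sup.absorb2)
    then show ?thesis using XY(3,4) unfolding conflict_free_def by blast
  qed
  moreover have "defends A R (\<Union>C) a" if "a \<in> X" "X \<in> C" for a X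
    using that adm defends_mono[of X "\<Union>C"] unfolding admissible_def by blast
  moreover have "\<Union>C \<subseteq> A" using adm unfolding admissible_def by blast
  ultimately show ?thesis unfolding admissible_def conflict_free_def by blast
qed

lemma preferred_ext_above_admissible:
  assumes "admissible A R E0"
  shows "\<exists>E. preferred_ext A R E \<and> E0 \<subseteq> E"
proof -
  let ?\<A> = "{X. admissible A R X \<and> E0 \<subseteq> X}"
  have ne: "?\<A> \<noteq> {}" using assms by blast
  have chain: "\<Union>C \<in> ?\<A>" if "C \<noteq> {}" and chain: "subset.chain ?\<A> C" for C
  proof -
    have "admissible A R (\<Union>C)"
      by (rule admissible_Union_chain) (use chain in \<open>auto simp: subset_chain_def\<close>)
    moreover have "E0 \<subseteq> \<Union>C" using \<open>C \<noteq> {}\<close> chain unfolding subset_chain_def by blast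
    ultimately show ?thesis by blast
  qed
  have "\<exists>M\<in>?\<A>. \<forall>X\<in>?\<A>. M \<subseteq> X \<longrightarrow> X = M"
    by (rule subset_Zorn_nonempty[OF ne]) (rule chain)
  then obtain M where M: "M \<in> ?\<A>" and max: "\<forall>X\<in>?\<A>. M \<subseteq> X \<longrightarrow> X = M" ..
  have "a \<in> M" if "a \<in> A" "defends A R M a" for a
  proof -
    have "insert a M \<in> ?\<A>" using M admissible_insert[OF _ that] by blast
    then show ?thesis using max by blast
  qed
  with M have complete: "complete_ext A R M" unfolding complete_ext_iff_admissible by blast
  have "E = M" if "complete_ext A R E" "M \<subseteq> E" for E
  proof -
    have "E \<in> ?\<A>" using M that unfolding complete_ext_iff_admissible by blast
    then show ?thesis using max \<open>M \<subseteq> E\<close> by blast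
  qed
  with complete M show ?thesis unfolding preferred_ext_def by blast
qed

lemma complete_ext_exists: "\<exists>E. complete_ext A R E"
proof -
  have "admissible A R {}" unfolding admissible_def conflict_free_def by blast
  then obtain E where "preferred_ext A R E" using preferred_ext_above_admissible by blast
  then show ?thesis unfolding preferred_ext_def by blast
qed

text \<open>The least fixed point of the characteristic function is conflict-free because it lies
  below every complete extension.\<close>
lemma grounded_ext_exists: "\<exists>E. grounded_ext A R E"
proof -
  define F where "F X = {a \<in> A. defends A R X a}" for X
  have "mono F" by (rule monoI) (auto simp: F_def intro: defends_mono)
  then have fixpoint: "a \<in> lfp F \<longleftrightarrow> a \<in> A \<and> defends A R (lfp F) a" for a
    by (subst lfp_unfold) (simp_all add: F_def)
  have least: "lfp F \<subseteq> E" if "complete_ext A R E" for E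
    by (rule lfp_lowerbound) (use that in \<open>auto simp: F_def complete_ext_def\<close>)
  obtain E where E: "complete_ext A R E" using complete_ext_exists by blast
  have "conflict_free R (lfp F)"
    using least[OF E] E unfolding complete_ext_def conflict_free_def by blast
  with fixpoint have "complete_ext A R (lfp F)" unfolding complete_ext_def by blast
  with least show ?thesis unfolding grounded_ext_def by blast
qed

lemma ext_restriction_surjective:
  assumes restrict: "\<And>E. complete_ext B R E \<Longrightarrow> complete_ext A R (E \<inter> A)"
    and lift: "\<And>E1. complete_ext A R E1 \<Longrightarrow> \<exists>E. complete_ext B R E \<and> E \<inter> A = E1"
    and E1: "ext s A R E1"
  shows "\<exists>E. ext s B R E \<and> E1 = E \<inter> A"
proof (cases s)
  case Cmp
  then show ?thesis using E1 lift by fastforce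
next
  case Prf
  then have E1: "preferred_ext A R E1" using E1 by simp
  then obtain E where E: "complete_ext B R E" "E \<inter> A = E1"
    using lift unfolding preferred_ext_def by blast
  then obtain P where P: "preferred_ext B R P" "E \<subseteq> P"
    using preferred_ext_above_admissible unfolding complete_ext_iff_admissible by blast
  then have "complete_ext A R (P \<inter> A)" using restrict unfolding preferred_ext_def by blast
  moreover have "E1 \<subseteq> P \<inter> A" using E P by blast
  ultimately have "E1 = P \<inter> A" using E1 unfolding preferred_ext_def by blast
  then show ?thesis using P Prf by auto
next
  case Grd
  then have E1: "grounded_ext A R E1" using E1 by simp
  obtain G where G: "grounded_ext B R G" using grounded_ext_exists by blast
  then have "E1 \<subseteq> G \<inter> A" using restrict E1 unfolding grounded_ext_def by blast
  moreover obtain E where "complete_ext B R E" "E \<inter> A = E1"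
    using lift E1 unfolding grounded_ext_def by blast
  then have "G \<inter> A \<subseteq> E1" using G unfolding grounded_ext_def by blast
  ultimately show ?thesis using G Grd by auto
qed

section \<open>Arguments over independent sets of formulas\<close>

lemma Arg_iff: "a \<in> Arg vd T \<longleftrightarrow> finite (fst a) \<and> fst a \<subseteq> T \<and> vd (fst a) (snd a)"
  by (cases a) (simp add: Arg_def)

lemma Arg_mono: "T \<subseteq> T' \<Longrightarrow> Arg vd T \<subseteq> Arg vd T'"
  unfolding Arg_def by blast

locale pre_relevant_setting =
  fixes atoms :: "'f \<Rightarrow> 'a set" and vd :: "'f set \<Rightarrow> 'f \<Rightarrow> bool"
    and ctr :: "'f \<Rightarrow> 'f set" and hat :: "'f set \<Rightarrow> 'f set"
  assumes setting: "setting hat" and pre_relevance: "pre_relevance atoms vd ctr hat"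
begin

abbreviation att :: "'f set \<times> 'f \<Rightarrow> 'f set \<times> 'f \<Rightarrow> bool" where
  "att \<equiv> attacks ctr hat"

text \<open>Whether an argument is attacked depends only on its premises, so attack and defence
  can be stated for premise sets.\<close>
definition attacks_premises :: "'f set \<times> 'f \<Rightarrow> 'f set \<Rightarrow> bool" where
  "attacks_premises b \<Delta> \<longleftrightarrow> (\<exists>\<phi>\<in>hat \<Delta>. snd b \<in> ctr \<phi>)"

definition defends_premises :: "('f set \<times> 'f) set \<Rightarrow> ('f set \<times> 'f) set \<Rightarrow> 'f set \<Rightarrow> bool" where
  "defends_premises A E \<Delta> \<longleftrightarrow> (\<forall>b\<in>A. attacks_premises b \<Delta> \<longrightarrow> (\<exists>c\<in>E. att c b))"

lemma attacks_iff_attacks_premises: "att b a \<longleftrightarrow> attacks_premises b (fst a)"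
  unfolding attacks_def attacks_premises_def ..

lemma defends_iff_defends_premises: "defends A att E a \<longleftrightarrow> defends_premises A E (fst a)"
  unfolding defends_def defends_premises_def attacks_iff_attacks_premises ..

lemma hat_mono:
  assumes "finite \<Delta>" and "\<Delta>' \<subseteq> \<Delta>"
  shows "hat \<Delta>' \<subseteq> hat \<Delta>"
proof -
  have "\<forall>\<Delta> \<Delta>'. finite \<Delta> \<and> finite \<Delta>' \<longrightarrow> hat \<Delta> \<subseteq> hat (\<Delta> \<union> \<Delta>')"
    using pre_relevance unfolding pre_relevance_def by (elim conjE)
  moreover have "finite \<Delta>'" using assms finite_subset by blast
  ultimately have "hat \<Delta>' \<subseteq> hat (\<Delta>' \<union> \<Delta>)" using \<open>finite \<Delta>\<close> by blast
  then show ?thesis using \<open>\<Delta>' \<subseteq> \<Delta>\<close> by (simp add: sup.absorb2)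
qed

lemma attacks_premises_mono:
  "attacks_premises b \<Delta>' \<Longrightarrow> \<Delta>' \<subseteq> \<Delta> \<Longrightarrow> finite \<Delta> \<Longrightarrow> attacks_premises b \<Delta>"
  unfolding attacks_premises_def using hat_mono by blast

lemma not_attacks_premises_empty: "\<not> attacks_premises b {}"
  using setting unfolding setting_def attacks_premises_def by simp

lemma attacks_superargument: "att c r \<Longrightarrow> fst r \<subseteq> fst b \<Longrightarrow> finite (fst b) \<Longrightarrow> att c b"
  unfolding attacks_iff_attacks_premises by (rule attacks_premises_mono)

lemma defends_premises_mono: "E \<subseteq> E' \<Longrightarrow> defends_premises A E \<Delta> \<Longrightarrow> defends_premises A E' \<Delta>"
  unfolding defends_premises_def by blast

lemma defends_premises_antimono:
  "defends_premises A E \<Delta> \<Longrightarrow> \<Delta>' \<subseteq> \<Delta> \<Longrightarrow> finite \<Delta> \<Longrightarrow> defends_premises A E \<Delta>'"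
  unfolding defends_premises_def using attacks_premises_mono by blast

lemma defends_premises_empty: "defends_premises A E {}"
  unfolding defends_premises_def using not_attacks_premises_empty by blast

lemma complete_ext_defends_premises:
  "complete_ext A att E \<Longrightarrow> c \<in> E \<Longrightarrow> defends_premises A E (fst c)"
  unfolding complete_ext_def defends_iff_defends_premises by blast

lemma complete_ext_memberI:
  assumes "complete_ext A att E" and "defends_premises A E \<Delta>" and "finite \<Delta>"
    and "a \<in> A" and "fst a \<subseteq> \<Delta>"
  shows "a \<in> E"
  using assms defends_premises_antimono[of A E \<Delta> "fst a"]
  unfolding complete_ext_def defends_iff_defends_premises by blast

lemma defends_premises_superargument:
  assumes "defends_premises A E \<Delta>" "r \<in> A" "attacks_premises r \<Delta>" "fst r \<subseteq> fst b" "finite (fst b)"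
  shows "\<exists>c\<in>E. att c b"
  using assms attacks_superargument unfolding defends_premises_def by blast

lemma complete_ext_defended_premises_no_attack:
  assumes E: "complete_ext A att E"
    and def: "defends_premises A E \<Delta>" "defends_premises A E \<Delta>'" "finite \<Delta>'"
    and r: "r \<in> A" "fst r \<subseteq> \<Delta>'"
  shows "\<not> attacks_premises r \<Delta>"
proof
  assume "attacks_premises r \<Delta>"
  then obtain c where c: "c \<in> E" "attacks_premises c (fst r)"
    using def(1) r(1) unfolding defends_premises_def attacks_iff_attacks_premises by blast
  then have "attacks_premises c \<Delta>'" using attacks_premises_mono r(2) def(3) by blast
  moreover have "c \<in> A" using c(1) E unfolding complete_ext_def by blast
  ultimately obtain d where "d \<in> E" "att d c" using def(2) unfolding defends_premises_def by blast
  then show False using c(1) E unfolding complete_ext_def conflict_free_def by blast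
qed

end

locale independent_union = pre_relevant_setting atoms vd ctr hat
  for atoms :: "'f \<Rightarrow> 'a set" and vd ctr hat +
  fixes S S' :: "'f set"
  assumes indep: "indep atoms S S'"
begin

text \<open>Primeness, for the attacker's premises split into those in \<open>S\<close> and the rest. \<open>S\<close> and
  \<open>S'\<close> may share atom-free formulas; splitting off the rest rather than \<open>\<inter> S'\<close> keeps the
  second part of an argument over \<open>S\<close> empty.\<close>
lemma attack_split:
  assumes b: "b \<in> Arg vd (S \<union> S')"
    and \<Delta>: "finite \<Delta>1" "\<Delta>1 \<subseteq> S" "finite \<Delta>2" "\<Delta>2 \<subseteq> S'"
    and attack: "attacks_premises b (\<Delta>1 \<union> \<Delta>2)"
  shows "(\<exists>r\<in>Arg vd S. fst r \<subseteq> fst b \<and> attacks_premises r \<Delta>1)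
       \<or> (\<exists>r\<in>Arg vd S'. fst r \<subseteq> fst b - S \<and> attacks_premises r \<Delta>2)"
proof -
  let ?\<Gamma> = "fst b"
  have "?\<Gamma> \<inter> S \<union> (?\<Gamma> - S) = ?\<Gamma>" by blast
  then have \<Gamma>: "finite ?\<Gamma>" "?\<Gamma> \<subseteq> S \<union> S'" "vd (?\<Gamma> \<inter> S \<union> (?\<Gamma> - S)) (snd b)"
    using b unfolding Arg_iff by simp_all
  obtain \<phi> where \<phi>: "\<phi> \<in> hat (\<Delta>1 \<union> \<Delta>2)" "snd b \<in> ctr \<phi>"
    using attack unfolding attacks_premises_def by blast
  have atoms: "Atoms atoms (?\<Gamma> \<inter> S) \<subseteq> Atoms atoms S" "Atoms atoms \<Delta>1 \<subseteq> Atoms atoms S"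
    "Atoms atoms (?\<Gamma> - S) \<subseteq> Atoms atoms S'" "Atoms atoms \<Delta>2 \<subseteq> Atoms atoms S'"
    using \<Gamma>(2) \<Delta> unfolding Atoms_def by blast+
  have "(\<exists>\<Gamma>1 \<phi>1 \<psi>1. \<Gamma>1 \<subseteq> ?\<Gamma> \<inter> S \<and> \<phi>1 \<in> hat \<Delta>1 \<and> \<psi>1 \<in> ctr \<phi>1 \<and> vd \<Gamma>1 \<psi>1)
      \<or> (\<exists>\<Gamma>2 \<phi>2 \<psi>2. \<Gamma>2 \<subseteq> ?\<Gamma> - S \<and> \<phi>2 \<in> hat \<Delta>2 \<and> \<psi>2 \<in> ctr \<phi>2 \<and> vd \<Gamma>2 \<psi>2)"
    by (rule pre_relevance[unfolded pre_relevance_def, THEN conjunct2, THEN conjunct1, rule_format,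
          of "Atoms atoms S" "Atoms atoms S'" "?\<Gamma> \<inter> S" \<Delta>1 "?\<Gamma> - S" \<Delta>2 "snd b" \<phi>],
        intro conjI)
      (use indep atoms \<Gamma> \<Delta> \<phi> in \<open>simp_all add: indep_def\<close>)
  then show ?thesis
  proof (elim disjE exE conjE)
    fix \<Gamma>1 \<phi>1 \<psi>1 assume "\<Gamma>1 \<subseteq> ?\<Gamma> \<inter> S" "\<phi>1 \<in> hat \<Delta>1" "\<psi>1 \<in> ctr \<phi>1" "vd \<Gamma>1 \<psi>1"
    moreover have "finite \<Gamma>1" using \<open>\<Gamma>1 \<subseteq> ?\<Gamma> \<inter> S\<close> \<Gamma>(1) finite_subset by blast
    ultimately have "(\<Gamma>1, \<psi>1) \<in> Arg vd S" "attacks_premises (\<Gamma>1, \<psi>1) \<Delta>1" "\<Gamma>1 \<subseteq> ?\<Gamma>"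
      unfolding Arg_def attacks_premises_def by auto
    then show ?thesis by fastforce
  next
    fix \<Gamma>2 \<phi>2 \<psi>2 assume "\<Gamma>2 \<subseteq> ?\<Gamma> - S" "\<phi>2 \<in> hat \<Delta>2" "\<psi>2 \<in> ctr \<phi>2" "vd \<Gamma>2 \<psi>2"
    moreover have "finite \<Gamma>2" using \<open>\<Gamma>2 \<subseteq> ?\<Gamma> - S\<close> \<Gamma>(1) finite_subset by blast
    ultimately have "(\<Gamma>2, \<psi>2) \<in> Arg vd S'" "attacks_premises (\<Gamma>2, \<psi>2) \<Delta>2" "\<Gamma>2 \<subseteq> ?\<Gamma> - S"
      using \<Gamma>(2) unfolding Arg_def attacks_premises_def by auto
    then show ?thesis by fastforce
  qed
qed

lemma sub_attacker_in_S:
  assumes "b \<in> Arg vd (S \<union> S')" "finite \<Delta>" "\<Delta> \<subseteq> S" "attacks_premises b \<Delta>"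
  shows "\<exists>r\<in>Arg vd S. fst r \<subseteq> fst b \<and> attacks_premises r \<Delta>"
  using attack_split[of b \<Delta> "{}"] assms not_attacks_premises_empty by auto

lemma sub_attacker_in_S':
  assumes "b \<in> Arg vd (S \<union> S')" "finite \<Delta>" "\<Delta> \<subseteq> S'" "attacks_premises b \<Delta>"
  shows "\<exists>r\<in>Arg vd S'. fst r \<subseteq> fst b - S \<and> attacks_premises r \<Delta>"
  using attack_split[of b "{}" \<Delta>] assms not_attacks_premises_empty by auto

lemma defends_premises_in_union:
  assumes def: "defends_premises (Arg vd S) E \<Delta>" and "finite \<Delta>" "\<Delta> \<subseteq> S"
  shows "defends_premises (Arg vd (S \<union> S')) E \<Delta>"
  unfolding defends_premises_def
proof (intro ballI impI)
  fix b assume b: "b \<in> Arg vd (S \<union> S')" "attacks_premises b \<Delta>"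
  then obtain r where "r \<in> Arg vd S" "fst r \<subseteq> fst b" "attacks_premises r \<Delta>"
    using sub_attacker_in_S assms(2,3) by blast
  then show "\<exists>c\<in>E. att c b"
    using defends_premises_superargument[OF def] Arg_iff[of b vd "S \<union> S'"] b(1) by blast
qed

lemma complete_ext_restrict_defends_premises:
  assumes E: "complete_ext (Arg vd (S \<union> S')) att E"
    and def: "defends_premises (Arg vd (S \<union> S')) E \<Delta>"
  shows "defends_premises (Arg vd S) (E \<inter> Arg vd S) \<Delta>"
  unfolding defends_premises_def
proof (intro ballI impI)
  fix r assume r: "r \<in> Arg vd S" "attacks_premises r \<Delta>"
  have sub: "Arg vd S \<subseteq> Arg vd (S \<union> S')" by (rule Arg_mono) blast
  then obtain c where c: "c \<in> E" "att c r" using def r unfolding defends_premises_def by blast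
  then have c_Arg: "c \<in> Arg vd (S \<union> S')" using E unfolding complete_ext_def by blast
  moreover have "finite (fst r)" "fst r \<subseteq> S" using r(1) unfolding Arg_iff by auto
  ultimately obtain c' where c': "c' \<in> Arg vd S" "fst c' \<subseteq> fst c" "attacks_premises c' (fst r)"
    using sub_attacker_in_S c(2) unfolding attacks_iff_attacks_premises by blast
  have "finite (fst c)" using c_Arg unfolding Arg_iff by blast
  with c' sub have "c' \<in> E"
    using complete_ext_memberI[OF E complete_ext_defends_premises[OF E c(1)]] by blast
  then show "\<exists>e\<in>E \<inter> Arg vd S. att e r"
    using c' unfolding attacks_iff_attacks_premises by blast
qed

lemma restrict_complete_ext:
  assumes E: "complete_ext (Arg vd (S \<union> S')) att E"
  shows "complete_ext (Arg vd S) att (E \<inter> Arg vd S)"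
proof -
  have "a \<in> E" if a: "a \<in> Arg vd S" "defends_premises (Arg vd S) (E \<inter> Arg vd S) (fst a)" for a
  proof -
    have "finite (fst a)" "fst a \<subseteq> S" using a(1) unfolding Arg_iff by auto
    with a(2) have "defends_premises (Arg vd (S \<union> S')) E (fst a)"
      using defends_premises_in_union defends_premises_mono[of "E \<inter> Arg vd S" E] by blast
    moreover have "a \<in> Arg vd (S \<union> S')" using a(1) Arg_mono[of S "S \<union> S'"] by blast
    ultimately show ?thesis using E unfolding complete_ext_def defends_iff_defends_premises by blast
  qed
  moreover have "conflict_free att (E \<inter> Arg vd S)"
    using E unfolding complete_ext_def conflict_free_def by blast
  moreover have "defends_premises (Arg vd S) (E \<inter> Arg vd S) (fst a)" if "a \<in> E" for a
    using complete_ext_restrict_defends_premises[OF E complete_ext_defends_premises[OF E that]] .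
  ultimately show ?thesis unfolding complete_ext_def defends_iff_defends_premises by blast
qed

definition glue :: "('f set \<times> 'f) set \<Rightarrow> ('f set \<times> 'f) set \<Rightarrow> ('f set \<times> 'f) set" where
  "glue E1 E2 = {a \<in> Arg vd (S \<union> S').
     defends_premises (Arg vd S) E1 (fst a \<inter> S) \<and> defends_premises (Arg vd S') E2 (fst a - S)}"

lemma Arg_union_parts:
  assumes "a \<in> Arg vd (S \<union> S')"
  shows "finite (fst a)" "finite (fst a \<inter> S)" "finite (fst a - S)" "fst a - S \<subseteq> S'"
    "fst a \<inter> S \<union> (fst a - S) = fst a"
  using assms unfolding Arg_iff by auto

lemma glue_superset_left:
  assumes E1: "complete_ext (Arg vd S) att E1"
  shows "E1 \<subseteq> glue E1 E2"
proof
  fix d assume d: "d \<in> E1"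
  then have "d \<in> Arg vd S" using E1 unfolding complete_ext_def by blast
  then have d_Arg: "d \<in> Arg vd (S \<union> S')" and "fst d \<inter> S = fst d" "fst d - S = {}"
    unfolding Arg_iff by auto
  have "defends_premises (Arg vd S) E1 (fst d \<inter> S)"
    using complete_ext_defends_premises[OF E1 d] \<open>fst d \<inter> S = fst d\<close> by simp
  moreover have "defends_premises (Arg vd S') E2 (fst d - S)"
    unfolding \<open>fst d - S = {}\<close> by (rule defends_premises_empty)
  ultimately show "d \<in> glue E1 E2" using d_Arg unfolding glue_def by blast
qed

lemma glue_superset_right:
  assumes E2: "complete_ext (Arg vd S') att E2"
  shows "E2 \<subseteq> glue E1 E2"
proof
  fix d assume d: "d \<in> E2"
  then have "d \<in> Arg vd S'" using E2 unfolding complete_ext_def by blast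
  then have d_Arg: "d \<in> Arg vd (S \<union> S')" and d_fin: "finite (fst d)" "fst d \<subseteq> S'"
    unfolding Arg_iff by auto
  have "\<not> attacks_premises r (fst d \<inter> S)" if r: "r \<in> Arg vd S" for r
  proof
    assume "attacks_premises r (fst d \<inter> S)"
    moreover have "r \<in> Arg vd (S \<union> S')" "fst r - S = {}" using r unfolding Arg_iff by auto
    txt \<open>The part of \<open>r\<close> outside \<open>S\<close> is empty, so primeness yields a premise-free attacker
      of \<open>d\<close>, which nothing can counter.\<close>
    moreover have "finite (fst d \<inter> S)" "fst d \<inter> S \<subseteq> S'" using d_fin by auto
    ultimately obtain r' where r': "r' \<in> Arg vd S'" "fst r' \<subseteq> fst r - S" "attacks_premises r' (fst d \<inter> S)"
      using sub_attacker_in_S'[of r "fst d \<inter> S"] by blast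
    then have "attacks_premises r' (fst d)" using attacks_premises_mono d_fin(1) by blast
    then obtain c where "attacks_premises c (fst r')"
      using complete_ext_defends_premises[OF E2 d] r'(1)
      unfolding defends_premises_def attacks_iff_attacks_premises by blast
    moreover have "fst r' = {}" using r'(2) \<open>fst r - S = {}\<close> by blast
    ultimately show False using not_attacks_premises_empty by simp
  qed
  then have "defends_premises (Arg vd S) E1 (fst d \<inter> S)" unfolding defends_premises_def by blast
  moreover have "defends_premises (Arg vd S') E2 (fst d - S)"
    using defends_premises_antimono complete_ext_defends_premises[OF E2 d] d_fin(1) by blast
  ultimately show "d \<in> glue E1 E2" using d_Arg unfolding glue_def by blast
qed

lemma glue_Int_Arg:
  assumes E1: "complete_ext (Arg vd S) att E1"
  shows "glue E1 E2 \<inter> Arg vd S = E1"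
proof
  show "E1 \<subseteq> glue E1 E2 \<inter> Arg vd S"
    using glue_superset_left E1 unfolding complete_ext_def by blast
  show "glue E1 E2 \<inter> Arg vd S \<subseteq> E1"
  proof
    fix a assume a: "a \<in> glue E1 E2 \<inter> Arg vd S"
    then have "fst a \<inter> S = fst a" "finite (fst a)" using Arg_iff[of a vd S] by auto
    moreover have "defends_premises (Arg vd S) E1 (fst a \<inter> S)" using a unfolding glue_def by blast
    ultimately show "a \<in> E1" using complete_ext_memberI[OF E1] a by simp
  qed
qed

lemma glue_conflict_free:
  assumes E1: "complete_ext (Arg vd S) att E1" and E2: "complete_ext (Arg vd S') att E2"
  shows "conflict_free att (glue E1 E2)"
  unfolding conflict_free_def
proof (intro ballI notI)
  fix x y assume x: "x \<in> glue E1 E2" and y: "y \<in> glue E1 E2" and "att x y"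
  have x_Arg: "x \<in> Arg vd (S \<union> S')"
    and x_def: "defends_premises (Arg vd S) E1 (fst x \<inter> S)" "defends_premises (Arg vd S') E2 (fst x - S)"
    using x unfolding glue_def by auto
  have y_Arg: "y \<in> Arg vd (S \<union> S')"
    and y_def: "defends_premises (Arg vd S) E1 (fst y \<inter> S)" "defends_premises (Arg vd S') E2 (fst y - S)"
    using y unfolding glue_def by auto
  have "attacks_premises x (fst y \<inter> S \<union> (fst y - S))"
    using \<open>att x y\<close> Arg_union_parts(5)[OF y_Arg] unfolding attacks_iff_attacks_premises by simp
  from attack_split[OF x_Arg Arg_union_parts(2)[OF y_Arg] _ Arg_union_parts(3,4)[OF y_Arg] this]
  consider (left) r where "r \<in> Arg vd S" "fst r \<subseteq> fst x" "attacks_premises r (fst y \<inter> S)"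
    | (right) r where "r \<in> Arg vd S'" "fst r \<subseteq> fst x - S" "attacks_premises r (fst y - S)"
    by blast
  then show False
  proof cases
    case left
    then have "fst r \<subseteq> fst x \<inter> S" unfolding Arg_iff by blast
    with left show False
      using complete_ext_defended_premises_no_attack[OF E1 y_def(1) x_def(1)] Arg_union_parts(2)[OF x_Arg]
      by blast
  next
    case right
    then show False
      using complete_ext_defended_premises_no_attack[OF E2 y_def(2) x_def(2)] Arg_union_parts(3)[OF x_Arg]
      by blast
  qed
qed

lemma glue_defends:
  assumes E1: "complete_ext (Arg vd S) att E1" and E2: "complete_ext (Arg vd S') att E2"
    and a: "a \<in> glue E1 E2"
  shows "defends (Arg vd (S \<union> S')) att (glue E1 E2) a"
  unfolding defends_def
proof (intro ballI impI)
  fix b assume b: "b \<in> Arg vd (S \<union> S')" "att b a"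
  have a_Arg: "a \<in> Arg vd (S \<union> S')"
    and a_def: "defends_premises (Arg vd S) E1 (fst a \<inter> S)" "defends_premises (Arg vd S') E2 (fst a - S)"
    using a unfolding glue_def by auto
  have "attacks_premises b (fst a \<inter> S \<union> (fst a - S))"
    using b(2) Arg_union_parts(5)[OF a_Arg] unfolding attacks_iff_attacks_premises by simp
  from attack_split[OF b(1) Arg_union_parts(2)[OF a_Arg] _ Arg_union_parts(3,4)[OF a_Arg] this]
  consider (left) r where "r \<in> Arg vd S" "fst r \<subseteq> fst b" "attacks_premises r (fst a \<inter> S)"
    | (right) r where "r \<in> Arg vd S'" "fst r \<subseteq> fst b" "attacks_premises r (fst a - S)"
    by blast
  then show "\<exists>c\<in>glue E1 E2. att c b"
  proof cases
    case left
    then show ?thesis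
      using defends_premises_superargument[OF a_def(1)] glue_superset_left[OF E1]
        Arg_union_parts(1)[OF b(1)] by blast
  next
    case right
    then show ?thesis
      using defends_premises_superargument[OF a_def(2)] glue_superset_right[OF E2]
        Arg_union_parts(1)[OF b(1)] by blast
  qed
qed

lemma glue_defends_premises_left:
  assumes E1: "complete_ext (Arg vd S) att E1"
    and def: "defends_premises (Arg vd (S \<union> S')) (glue E1 E2) \<Delta>"
  shows "defends_premises (Arg vd S) E1 \<Delta>"
  unfolding defends_premises_def
proof (intro ballI impI)
  fix r assume r: "r \<in> Arg vd S" "attacks_premises r \<Delta>"
  moreover have "Arg vd S \<subseteq> Arg vd (S \<union> S')" by (rule Arg_mono) blast
  ultimately obtain e where e: "e \<in> glue E1 E2" "att e r" using def unfolding defends_premises_def by blast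
  then have e_Arg: "e \<in> Arg vd (S \<union> S')" and e_def: "defends_premises (Arg vd S) E1 (fst e \<inter> S)"
    unfolding glue_def by auto
  have "finite (fst r)" "fst r \<subseteq> S" using r(1) unfolding Arg_iff by auto
  then obtain r' where r': "r' \<in> Arg vd S" "fst r' \<subseteq> fst e" "attacks_premises r' (fst r)"
    using sub_attacker_in_S[OF e_Arg] e(2) unfolding attacks_iff_attacks_premises by blast
  then have "fst r' \<subseteq> fst e \<inter> S" unfolding Arg_iff by blast
  then have "r' \<in> E1" using complete_ext_memberI[OF E1 e_def Arg_union_parts(2)[OF e_Arg] r'(1)] by blast
  then show "\<exists>c\<in>E1. att c r" using r'(3) unfolding attacks_iff_attacks_premises by blast
qed

lemma glue_defends_premises_right:
  assumes E2: "complete_ext (Arg vd S') att E2"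
    and def: "defends_premises (Arg vd (S \<union> S')) (glue E1 E2) \<Delta>"
  shows "defends_premises (Arg vd S') E2 \<Delta>"
  unfolding defends_premises_def
proof (intro ballI impI)
  fix r assume r: "r \<in> Arg vd S'" "attacks_premises r \<Delta>"
  moreover have "Arg vd S' \<subseteq> Arg vd (S \<union> S')" by (rule Arg_mono) blast
  ultimately obtain e where e: "e \<in> glue E1 E2" "att e r" using def unfolding defends_premises_def by blast
  then have e_Arg: "e \<in> Arg vd (S \<union> S')" and e_def: "defends_premises (Arg vd S') E2 (fst e - S)"
    unfolding glue_def by auto
  have "finite (fst r)" "fst r \<subseteq> S'" using r(1) unfolding Arg_iff by auto
  then obtain r' where r': "r' \<in> Arg vd S'" "fst r' \<subseteq> fst e - S" "attacks_premises r' (fst r)"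
    using sub_attacker_in_S'[OF e_Arg] e(2) unfolding attacks_iff_attacks_premises by blast
  then have "r' \<in> E2" using complete_ext_memberI[OF E2 e_def Arg_union_parts(3)[OF e_Arg] r'(1)] by blast
  then show "\<exists>c\<in>E2. att c r" using r'(3) unfolding attacks_iff_attacks_premises by blast
qed

lemma glue_closed:
  assumes E1: "complete_ext (Arg vd S) att E1" and E2: "complete_ext (Arg vd S') att E2"
    and a: "a \<in> Arg vd (S \<union> S')" and def: "defends (Arg vd (S \<union> S')) att (glue E1 E2) a"
  shows "a \<in> glue E1 E2"
proof -
  have "defends_premises (Arg vd (S \<union> S')) (glue E1 E2) (fst a)"
    using def unfolding defends_iff_defends_premises .
  then have "defends_premises (Arg vd (S \<union> S')) (glue E1 E2) (fst a \<inter> S)"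
    and "defends_premises (Arg vd (S \<union> S')) (glue E1 E2) (fst a - S)"
    using defends_premises_antimono Arg_union_parts(1)[OF a] by blast+
  then show ?thesis
    using glue_defends_premises_left[OF E1] glue_defends_premises_right[OF E2] a
    unfolding glue_def by blast
qed

lemma glue_complete:
  assumes E1: "complete_ext (Arg vd S) att E1" and E2: "complete_ext (Arg vd S') att E2"
  shows "complete_ext (Arg vd (S \<union> S')) att (glue E1 E2)"
proof -
  have "glue E1 E2 \<subseteq> Arg vd (S \<union> S')" unfolding glue_def by blast
  then show ?thesis
    unfolding complete_ext_def
    using glue_conflict_free[OF E1 E2] glue_defends[OF E1 E2] glue_closed[OF E1 E2] by blast
qed

lemma complete_ext_lift:
  assumes "complete_ext (Arg vd S) att E1"
  shows "\<exists>E. complete_ext (Arg vd (S \<union> S')) att E \<and> E \<inter> Arg vd S = E1"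
proof -
  obtain E2 where "complete_ext (Arg vd S') att E2" using complete_ext_exists by blast
  then show ?thesis using glue_complete glue_Int_Arg assms by blast
qed

end

theorem lemma7:
  fixes atoms :: "'f \<Rightarrow> 'a set"
    and vd :: "'f set \<Rightarrow> 'f \<Rightarrow> bool"
    and ctr :: "'f \<Rightarrow> 'f set"
    and hat :: "'f set \<Rightarrow> 'f set"
    and S S' :: "'f set"
    and s :: semantics
    and E1 :: "('f set \<times> 'f) set"
  assumes "\<forall>\<phi>. finite (atoms \<phi>)"
    and "setting hat"
    and "pre_relevance atoms vd ctr hat"
    and "indep atoms S S'"
    and "E1 \<in> Sem s vd ctr hat S"
  shows "\<exists>E \<in> Sem s vd ctr hat (S \<union> S'). E1 = E \<inter> Arg vd S"
proof -
  interpret independent_union atoms vd ctr hat S S'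
    using assms(2-4) by unfold_locales
  have "ext s (Arg vd S) att E1" using assms(5) unfolding Sem_def by simp
  then obtain E where "ext s (Arg vd (S \<union> S')) att E" "E1 = E \<inter> Arg vd S"
    using ext_restriction_surjective[OF restrict_complete_ext complete_ext_lift] by blast
  then show ?thesis unfolding Sem_def by blast
qed

end
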